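(* Let $k\in\mathbb{R}_{\ge0}$, let $(A,B,C)\in\mathbb{R}_+^3$ be a $k$-initial triple and $(a,b,c)\in\mathbb{R}_+^3$ a $0$-initial triple. Let $\mathbf{w}=[w_1,w_2,\dots]$ be an infinite reduced sequence, and for $n\ge1$ put $(X_n,Y_n,Z_n)=\mathcal{M}_k^{\mathbf{w}_n}(A,B,C)$ and $(x_n,y_n,z_n)=\mathcal{M}^{\mathbf{w}_n}(a,b,c)$. (1) If each of $1,2,3$ appears infinitely many times in $\mathbf{w}$, then there is a real number $q$ such that $\lim_{n\to\infty}X_n/x_n=\lim_{n\to\infty}Y_n/y_n=\lim_{n\to\infty}Z_n/z_n=q$. (2) If some index $i\in\{1,2,3\}$ appears only finitely many times in $\mathbf{w}$, then there is a real number $q$ such that for both indices $j\in\{1,2,3\}\setminus\{i\}$, the ratio of the $j$-th component of $(X_n,Y_n,Z_n)$ to the $j$-th component of $(x_n,y_n,z_n)$ converges to $q$ as $n\to\infty$.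
   Context: For $k\in\mathbb{R}_{\ge0}$ define maps on $\mathbb{R}_+^3$: $\mathcal{M}_{1;k}(X,Y,Z)=(k+Y+Z,Y,Z)$, $\mathcal{M}_{2;k}(X,Y,Z)=(X,k+X+Z,Z)$, $\mathcal{M}_{3;k}(X,Y,Z)=(X,Y,k+X+Y)$, and $\mathcal{M}_i=\mathcal{M}_{i;0}$. A $k$-initial triple is $(A,B,C)\in\mathbb{R}_+^3$ with $A\neq B+C+k$, $B\neq A+C+k$, $C\neq A+B+k$. A sequence $\mathbf{w}=[w_1,w_2,\dots]$ with $w_i\in\{1,2,3\}$ is reduced if $w_i\neq w_{i+1}$ for all $i$; $\mathbf{w}_n=[w_1,\dots,w_n]$, and $\mathcal{M}_k^{\mathbf{w}_n}=\mathcal{M}_{w_n;k}\circ\cdots\circ\mathcal{M}_{w_1;k}$, $\mathcal{M}^{\mathbf{w}_n}=\mathcal{M}_{w_n}\circ\cdots\circ\mathcal{M}_{w_1}$. (The triples $\mathcal{M}_k^{\mathbf{w}}(A,B,C)$ form the $k$-generalized Euclid tree; for $k=0$ the classical Euclid tree.) *)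

theory Defs
  imports Complex_Main
begin

type_synonym triple = "real \<times> real \<times> real"

fun Mk :: "real \<Rightarrow> nat \<Rightarrow> triple \<Rightarrow> triple" where
  "Mk k i (X, Y, Z) =
     (if i = 1 then (k + Y + Z, Y, Z)
      else if i = 2 then (X, k + X + Z, Z)
      else if i = 3 then (X, Y, k + X + Y)
      else (X, Y, Z))"

fun comp :: "nat \<Rightarrow> triple \<Rightarrow> real" where
  "comp j (X, Y, Z) = (if j = 1 then X else if j = 2 then Y else Z)"

definition pos_triple :: "triple \<Rightarrow> bool" where
  "pos_triple t \<longleftrightarrow> comp 1 t > 0 \<and> comp 2 t > 0 \<and> comp 3 t > 0"

definition k_initial :: "real \<Rightarrow> triple \<Rightarrow> bool" where
  "k_initial k t \<longleftrightarrow> pos_triple t \<and>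
     (case t of (A, B, C) \<Rightarrow> A \<noteq> B + C + k \<and> B \<noteq> A + C + k \<and> C \<noteq> A + B + k)"

text \<open>An infinite sequence w = [w_1, w_2, ...] is encoded as w :: nat => nat with
  w 0 = w_1, w 1 = w_2, ...\<close>
definition reduced_seq :: "(nat \<Rightarrow> nat) \<Rightarrow> bool" where
  "reduced_seq w \<longleftrightarrow> (\<forall>n. w n \<in> {1,2,3}) \<and> (\<forall>n. w n \<noteq> w (Suc n))"

fun iterM :: "real \<Rightarrow> (nat \<Rightarrow> nat) \<Rightarrow> nat \<Rightarrow> triple \<Rightarrow> triple" where
  "iterM k w 0 t = t"
| "iterM k w (Suc n) t = Mk k (w n) (iterM k w n t)"

end

(* Adding k to every entry turns M_{i;k} into M_i, so (X_n + k, Y_n + k, Z_n + k) runs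
   through the classical Euclid tree of (A + k, B + k, C + k) and it suffices to compare two
   classical trees along w.  After the first step the entry just updated is the sum of the
   other two, so all 2x2 minors of the pair of triples have one absolute value D, which no
   later step changes (M_i itself is singular, hence only from n = 1 on).  The ratios of
   corresponding entries therefore differ by at most D / (c * denominator), c the least entry of
   (a, b, c).  A new ratio is the mediant of two old ones, so the least ratio increases and
   the largest decreases, and a recurring index makes its denominator grow by 2c at each
   occurrence.  If all indices recur, all ratios follow the convergent least ratio; if i
   occurs finitely often, its ratio is eventually constant and the other two indices recur.
   Only the positivity of (a, b, c) is used. *)

theory Submission
  imports Defs "HOL-Library.Infinite_Set"
begin

definition shift :: "real \<Rightarrow> triple \<Rightarrow> triple" where
  "shift k P = (case P of (X, Y, Z) \<Rightarrow> (X + k, Y + k, Z + k))"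

lemma comp_shift: "comp j (shift k P) = comp j P + k"
  by (cases P) (simp add: shift_def)

lemma Mk_0_shift: "Mk 0 i (shift k P) = shift k (Mk k i P)"
  by (cases P) (simp add: shift_def)

lemma iterM_0_shift: "iterM 0 w n (shift k P) = shift k (iterM k w n P)"
  by (induction n) (simp_all add: Mk_0_shift)

lemma comp_Mk:
  assumes "i \<in> {1,2,3}" "j \<in> {1,2,3}"
  shows "comp j (Mk k i P) =
    (if j = i then k + comp 1 P + comp 2 P + comp 3 P - comp j P else comp j P)"
  using assms by (cases P) auto

lemma comp_Mk_0_self:
  assumes "i \<in> {1,2,3}"
  obtains a b where "a \<in> {1,2,3}" "b \<in> {1,2,3}"
    "\<And>P. comp i (Mk 0 i P) = comp a P + comp b P"
proof -
  consider "i = 1" | "i = 2" | "i = 3" using assms by auto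
  then show thesis
  proof cases
    case 1 then show ?thesis by (intro that[of 2 3]) (auto simp: comp_Mk)
  next
    case 2 then show ?thesis by (intro that[of 1 3]) (auto simp: comp_Mk)
  next
    case 3 then show ?thesis by (intro that[of 1 2]) (auto simp: comp_Mk)
  qed
qed

lemma comp_Mk_0_ge:
  assumes "i \<in> {1,2,3}" "j \<in> {1,2,3}" "c \<ge> 0" "\<forall>l\<in>{1,2,3}. comp l P \<ge> c"
  shows "comp j (Mk 0 i P) \<ge> c"
  using assms by (auto simp: comp_Mk)

lemma index_avoiding:
  assumes "i \<in> {1,2,3::nat}" "p \<in> {1,2,3::nat}"
  obtains b where "b \<in> {1,2,3}" "b \<noteq> i" "b \<noteq> p"
proof -
  have "i = 1 \<or> i = 2 \<or> i = 3" "p = 1 \<or> p = 2 \<or> p = 3" using assms by simp_all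
  then show thesis
    by (elim disjE) (simp_all add: that[of 1] that[of 2] that[of 3])
qed

lemma comp_Mk_0_Mk_0_growth:
  assumes "i \<in> {1,2,3}" "p \<in> {1,2,3}" "i \<noteq> p"
  obtains b where "b \<in> {1,2,3}"
    "\<And>P. comp i (Mk 0 i (Mk 0 p P)) = comp i (Mk 0 p P) + 2 * comp b P"
proof -
  obtain b where "b \<in> {1,2,3}" "b \<noteq> i" "b \<noteq> p"
    using index_avoiding[OF assms(1,2)] .
  then show thesis using assms by (intro that[of b]) (auto simp: comp_Mk)
qed

definition sum_of_others :: "nat \<Rightarrow> triple \<Rightarrow> bool" where
  "sum_of_others p P \<longleftrightarrow> 2 * comp p P = comp 1 P + comp 2 P + comp 3 P"

lemma sum_of_others_Mk_0: "i \<in> {1,2,3} \<Longrightarrow> sum_of_others i (Mk 0 i P)"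
  by (auto simp: sum_of_others_def comp_Mk)

definition minor :: "nat \<Rightarrow> nat \<Rightarrow> triple \<Rightarrow> triple \<Rightarrow> real" where
  "minor j l P Q = comp j P * comp l Q - comp l P * comp j Q"

lemma abs_minor_eq:
  assumes "p \<in> {1,2,3}" "sum_of_others p P" "sum_of_others p Q"
    and "j \<in> {1,2,3}" "l \<in> {1,2,3}" "j \<noteq> l"
  shows "\<bar>minor j l P Q\<bar> = \<bar>minor 1 2 P Q\<bar>"
proof -
  obtain a b c x y z where PQ: "P = (a, b, c)" "Q = (x, y, z)"
    by (cases P, cases Q) auto
  consider "p = 1" | "p = 2" | "p = 3" using assms(1) by auto
  then have "\<bar>b * z - c * y\<bar> = \<bar>a * y - b * x\<bar> \<and> \<bar>a * z - c * x\<bar> = \<bar>a * y - b * x\<bar>"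
  proof cases
    case 1
    then have "a = b + c" "x = y + z" using assms(2,3) PQ by (auto simp: sum_of_others_def)
    then show ?thesis by (simp add: algebra_simps abs_minus_commute)
  next
    case 2
    then have "b = a + c" "y = x + z" using assms(2,3) PQ by (auto simp: sum_of_others_def)
    then show ?thesis by (simp add: algebra_simps abs_minus_commute)
  next
    case 3
    then have "c = a + b" "z = x + y" using assms(2,3) PQ by (auto simp: sum_of_others_def)
    then show ?thesis by (simp add: algebra_simps abs_minus_commute)
  qed
  then show ?thesis
    using assms(4-6) PQ by (auto simp: minor_def abs_minus_commute)
qed

lemma abs_minor_Mk_0:
  assumes "i \<in> {1,2,3}" "p \<in> {1,2,3}" "sum_of_others p P" "sum_of_others p Q"
  shows "\<bar>minor 1 2 (Mk 0 i P) (Mk 0 i Q)\<bar> = \<bar>minor 1 2 P Q\<bar>"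
proof -
  obtain j where j: "j \<in> {1,2,3}" "j \<noteq> i"
    using index_avoiding[OF assms(1) assms(1)] by blast
  obtain l where l: "l \<in> {1,2,3}" "l \<noteq> i" "l \<noteq> j"
    using index_avoiding[OF assms(1) j(1)] .
  have jl: "j \<in> {1,2,3}" "l \<in> {1,2,3}" "j \<noteq> l" "j \<noteq> i" "l \<noteq> i"
    using j l by auto
  have "\<bar>minor 1 2 (Mk 0 i P) (Mk 0 i Q)\<bar> = \<bar>minor j l (Mk 0 i P) (Mk 0 i Q)\<bar>"
    using abs_minor_eq[OF assms(1) sum_of_others_Mk_0 sum_of_others_Mk_0 jl(1-3)] assms(1) by simp
  also have "\<dots> = \<bar>minor j l P Q\<bar>"
    using jl assms(1) by (simp add: minor_def comp_Mk)
  also have "\<dots> = \<bar>minor 1 2 P Q\<bar>"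
    using abs_minor_eq[OF assms(2-4) jl(1-3)] .
  finally show ?thesis .
qed

lemma mediant_between:
  fixes a b c e :: real
  assumes "c > 0" "e > 0"
  shows "min (a / c) (b / e) \<le> (a + b) / (c + e) \<and> (a + b) / (c + e) \<le> max (a / c) (b / e)"
proof (cases "a / c \<le> b / e")
  case True
  then have "a * e \<le> b * c" using assms by (simp add: field_simps)
  then show ?thesis using True assms by (simp add: field_simps)
next
  case False
  then have "b * c \<le> a * e" using assms by (simp add: field_simps)
  then show ?thesis using False assms by (simp add: field_simps)
qed

lemma reduced_seq_recurrent:
  assumes "reduced_seq w" "i \<in> {1,2,3}" "finite {n. w n = i}" "j \<in> {1,2,3} - {i}"
  shows "infinite {n. w n = j}"
proof
  assume "finite {n. w n = j}"
  then have "finite {n. w n \<in> {i, j}}" using assms(3) by (simp add: Collect_disj_eq)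
  then have "eventually (\<lambda>n. w n \<notin> {i, j}) sequentially"
    by (simp add: eventually_cofinite flip: cofinite_eq_sequentially)
  moreover from this have "eventually (\<lambda>n. w (Suc n) \<notin> {i, j}) sequentially"
    by (rule eventually_sequentially_Suc[THEN iffD2])
  ultimately have "eventually (\<lambda>n. False) sequentially"
    by eventually_elim (use assms in \<open>auto simp: reduced_seq_def; metis\<close>)
  then show False by simp
qed

locale euclid_tree_pair =
  fixes w :: "nat \<Rightarrow> nat" and P Q :: triple
  assumes reduced: "reduced_seq w" and pos_Q: "pos_triple Q"
begin

definition num :: "nat \<Rightarrow> nat \<Rightarrow> real" where
  "num n j = comp j (iterM 0 w n P)"

definition den :: "nat \<Rightarrow> nat \<Rightarrow> real" where
  "den n j = comp j (iterM 0 w n Q)"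

definition ratio :: "nat \<Rightarrow> nat \<Rightarrow> real" where
  "ratio n j = num n j / den n j"

definition ratio_min :: "nat \<Rightarrow> real" where
  "ratio_min n = Min (ratio n ` {1,2,3})"

definition ratio_max :: "nat \<Rightarrow> real" where
  "ratio_max n = Max (ratio n ` {1,2,3})"

definition den_min :: real where
  "den_min = min (comp 1 Q) (min (comp 2 Q) (comp 3 Q))"

definition minor_abs :: real where
  "minor_abs = \<bar>minor 1 2 (iterM 0 w 1 P) (iterM 0 w 1 Q)\<bar>"

lemma w_in: "w n \<in> {1,2,3}" and w_Suc_neq: "w (Suc n) \<noteq> w n"
  using reduced by (auto simp: reduced_seq_def) metis

lemma den_min_pos: "den_min > 0"
  using pos_Q by (simp add: den_min_def pos_triple_def)

lemma den_ge_den_min: "j \<in> {1,2,3} \<Longrightarrow> den n j \<ge> den_min"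
proof (induction n arbitrary: j)
  case 0
  then show ?case by (auto simp: den_def den_min_def)
next
  case (Suc n)
  have "\<forall>l\<in>{1,2,3}. comp l (iterM 0 w n Q) \<ge> den_min"
    using Suc.IH by (simp add: den_def)
  then show ?case
    using comp_Mk_0_ge[OF w_in Suc.prems less_imp_le[OF den_min_pos]] by (simp add: den_def)
qed

lemma den_pos: "j \<in> {1,2,3} \<Longrightarrow> den n j > 0"
  using den_ge_den_min[of j n] den_min_pos by linarith

lemma den_Suc: "j \<in> {1,2,3} \<Longrightarrow> j \<noteq> w n \<Longrightarrow> den (Suc n) j = den n j"
  and num_Suc: "j \<in> {1,2,3} \<Longrightarrow> j \<noteq> w n \<Longrightarrow> num (Suc n) j = num n j"
  using w_in by (simp_all add: den_def num_def comp_Mk)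

lemma den_growth:
  "den (Suc (Suc n)) (w (Suc n)) \<ge> den (Suc n) (w (Suc n)) + 2 * den_min"
proof -
  obtain b where "b \<in> {1,2,3}"
    "\<And>R. comp (w (Suc n)) (Mk 0 (w (Suc n)) (Mk 0 (w n) R)) =
       comp (w (Suc n)) (Mk 0 (w n) R) + 2 * comp b R"
    using comp_Mk_0_Mk_0_growth[OF w_in w_in w_Suc_neq] by blast
  then show ?thesis
    using den_ge_den_min[of b n] by (simp add: den_def)
qed

lemma den_Suc_mono: "j \<in> {1,2,3} \<Longrightarrow> incseq (\<lambda>n. den (Suc n) j)"
proof (rule incseq_SucI)
  fix n
  assume j: "j \<in> {1,2,3}"
  show "den (Suc n) j \<le> den (Suc (Suc n)) j"
  proof (cases "j = w (Suc n)")
    case True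
    then show ?thesis using den_growth[of n] den_min_pos by simp
  next
    case False
    then show ?thesis using den_Suc[OF j] by simp
  qed
qed

lemma den_tendsto_at_top:
  assumes j: "j \<in> {1,2,3}" and recurrent: "infinite {n. w n = j}"
  shows "filterlim (\<lambda>n. den n j) at_top sequentially"
proof -
  have "\<exists>N. \<forall>n\<ge>N. real K * den_min \<le> den n j" for K
  proof (induction K)
    case 0
    then show ?case using den_pos[OF j] by (auto intro: less_imp_le)
  next
    case (Suc K)
    then obtain N where N: "\<forall>n\<ge>N. real K * den_min \<le> den n j" by blast
    obtain m' where "m' \<ge> Suc N" "w m' = j"
      using recurrent unfolding infinite_nat_iff_unbounded_le by blast
    then obtain m where m: "m \<ge> N" "w (Suc m) = j"
      by (cases m') auto
    have "real (Suc K) * den_min \<le> den (Suc (Suc m)) j"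
      using den_growth[of m] N[rule_format, of "Suc m"] m den_min_pos by (simp add: algebra_simps)
    also have "den (Suc (Suc m)) j \<le> den n j" if "n \<ge> Suc (Suc m)" for n
      using incseqD[OF den_Suc_mono[OF j], of "Suc m" "n - 1"] that by simp
    finally show ?case by blast
  qed
  then have "eventually (\<lambda>n. real K * den_min \<le> den n j) sequentially" for K
    by (simp add: eventually_sequentially)
  moreover have "\<exists>K. Z \<le> real K * den_min" for Z
    using real_arch_simple[of "Z / den_min"] den_min_pos by (auto simp: field_simps)
  ultimately show ?thesis
    unfolding filterlim_at_top by (meson eventually_mono order.trans)
qed

lemma abs_minor_iterM:
  assumes "n \<ge> 1"
  shows "\<bar>minor 1 2 (iterM 0 w n P) (iterM 0 w n Q)\<bar> = minor_abs"
  using assms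
proof (induction n rule: dec_induct)
  case base
  then show ?case by (simp add: minor_abs_def)
next
  case (step n)
  then obtain m where m: "n = Suc m" by (cases n) auto
  have "sum_of_others (w m) (iterM 0 w n P)" "sum_of_others (w m) (iterM 0 w n Q)"
    using sum_of_others_Mk_0[OF w_in] m by simp_all
  then have "\<bar>minor 1 2 (Mk 0 (w n) (iterM 0 w n P)) (Mk 0 (w n) (iterM 0 w n Q))\<bar>
      = \<bar>minor 1 2 (iterM 0 w n P) (iterM 0 w n Q)\<bar>"
    by (rule abs_minor_Mk_0[OF w_in w_in])
  then show ?case using step.IH by simp
qed

lemma ratio_dist_le:
  assumes "n \<ge> 1" and j: "j \<in> {1,2,3}" and l: "l \<in> {1,2,3}"
  shows "\<bar>ratio n j - ratio n l\<bar> \<le> minor_abs / den_min * inverse (den n j)"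
proof (cases "j = l")
  case True
  have "0 \<le> minor_abs / den_min * inverse (den n j)"
    using den_pos[OF j, of n] den_min_pos
    by (intro mult_nonneg_nonneg divide_nonneg_pos) (simp_all add: minor_abs_def)
  then show ?thesis using True by simp
next
  case False
  obtain m where m: "n = Suc m" using assms(1) by (cases n) auto
  have "\<bar>minor j l (iterM 0 w n P) (iterM 0 w n Q)\<bar> = minor_abs"
    using abs_minor_eq[OF w_in sum_of_others_Mk_0[OF w_in] sum_of_others_Mk_0[OF w_in] j l False]
      abs_minor_iterM[OF assms(1)] unfolding m by simp
  moreover have "ratio n j - ratio n l = minor j l (iterM 0 w n P) (iterM 0 w n Q) / (den n j * den n l)"
    using den_pos[OF j, of n] den_pos[OF l, of n] by (simp add: ratio_def num_def den_def minor_def field_simps)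
  ultimately have "\<bar>ratio n j - ratio n l\<bar> = minor_abs / (den n j * den n l)"
    using den_pos[OF j, of n] den_pos[OF l, of n] by (simp add: abs_mult)
  also have "\<dots> \<le> minor_abs / (den n j * den_min)"
    using den_pos[OF j, of n] den_pos[OF l, of n] den_ge_den_min[OF l, of n] den_min_pos
    by (intro divide_left_mono mult_left_mono) (auto simp: minor_abs_def)
  finally show ?thesis by (simp add: field_simps)
qed

lemma ratio_tendsto_of_recurrent:
  assumes j: "j \<in> {1,2,3}" and recurrent: "infinite {n. w n = j}"
    and "s \<longlonglongrightarrow> q" and s: "\<And>n. \<exists>l\<in>{1,2,3}. s n = ratio n l"
  shows "(\<lambda>n. ratio n j) \<longlonglongrightarrow> q"
proof -
  have "(\<lambda>n. inverse (den n j)) \<longlonglongrightarrow> 0"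
    using tendsto_inverse_0_at_top[OF den_tendsto_at_top[OF j recurrent]] .
  moreover have "eventually (\<lambda>n. norm (ratio n j - s n)
      \<le> norm (inverse (den n j)) * (minor_abs / den_min)) sequentially"
    unfolding eventually_sequentially
  proof (intro exI allI impI)
    fix n :: nat
    assume "n \<ge> 1"
    obtain l where "l \<in> {1,2,3}" "s n = ratio n l" using s by blast
    then have "norm (ratio n j - s n) \<le> minor_abs / den_min * inverse (den n j)"
      using ratio_dist_le[OF \<open>n \<ge> 1\<close> j] by simp
    also have "\<dots> = norm (inverse (den n j)) * (minor_abs / den_min)"
      using den_pos[OF j, of n] by simp
    finally show "norm (ratio n j - s n) \<le> norm (inverse (den n j)) * (minor_abs / den_min)" .
  qed
  ultimately have "(\<lambda>n. ratio n j - s n) \<longlonglongrightarrow> 0"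
    by (rule tendsto_0_le)
  from tendsto_add[OF this \<open>s \<longlonglongrightarrow> q\<close>] show ?thesis by simp
qed

lemma ratio_min_le: "j \<in> {1,2,3} \<Longrightarrow> ratio_min n \<le> ratio n j"
  unfolding ratio_min_def by (rule Min_le) auto

lemma ratio_le_max: "j \<in> {1,2,3} \<Longrightarrow> ratio n j \<le> ratio_max n"
  unfolding ratio_max_def by (rule Max_ge) auto

lemma ratio_Suc_between:
  assumes j: "j \<in> {1,2,3}"
  shows "ratio_min n \<le> ratio (Suc n) j \<and> ratio (Suc n) j \<le> ratio_max n"
proof (cases "j = w n")
  case True
  obtain a b where ab: "a \<in> {1,2,3}" "b \<in> {1,2,3}"
    "\<And>R. comp (w n) (Mk 0 (w n) R) = comp a R + comp b R"
    using comp_Mk_0_self[OF w_in] by blast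
  have "ratio (Suc n) j = (num n a + num n b) / (den n a + den n b)"
    using True ab(3) by (simp add: ratio_def num_def den_def)
  moreover have "ratio_min n \<le> min (ratio n a) (ratio n b)" "max (ratio n a) (ratio n b) \<le> ratio_max n"
    using ab(1,2) by (simp_all add: ratio_min_le ratio_le_max)
  moreover note mediant_between[where a = "num n a" and b = "num n b", OF den_pos[OF ab(1), of n] den_pos[OF ab(2), of n]]
  ultimately show ?thesis by (simp add: ratio_def min_def max_def split: if_splits)
next
  case False
  then have "ratio (Suc n) j = ratio n j"
    using j by (simp add: ratio_def num_Suc den_Suc)
  then show ?thesis
    using j by (simp add: ratio_min_le ratio_le_max)
qed

lemma ratio_min_incseq: "incseq ratio_min"
proof (rule incseq_SucI)
  show "ratio_min n \<le> ratio_min (Suc n)" for n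
    unfolding ratio_min_def[of "Suc n"] using ratio_Suc_between by (intro Min.boundedI) auto
qed

lemma ratio_max_decseq: "decseq ratio_max"
proof (rule decseq_SucI)
  show "ratio_max (Suc n) \<le> ratio_max n" for n
    unfolding ratio_max_def[of "Suc n"] using ratio_Suc_between by (intro Max.boundedI) auto
qed

lemma ratio_tendsto_if_all_recurrent:
  assumes "\<forall>j\<in>{1,2,3}. infinite {n. w n = j}"
  shows "\<exists>q. \<forall>j\<in>{1,2,3}. (\<lambda>n. ratio n j) \<longlonglongrightarrow> q"
proof -
  have "ratio_min n \<le> ratio_max 0" for n
  proof -
    have "ratio_min n \<le> ratio_max n"
      using ratio_min_le[of 1 n] ratio_le_max[of 1 n] by simp
    also have "\<dots> \<le> ratio_max 0" using ratio_max_decseq by (simp add: decseq_def)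
    finally show ?thesis .
  qed
  then obtain q where q: "ratio_min \<longlonglongrightarrow> q"
    using incseq_convergent[OF ratio_min_incseq] by blast
  have min_attained: "\<exists>l\<in>{1,2,3}. ratio_min n = ratio n l" for n
    unfolding ratio_min_def using Min_in[of "ratio n ` {1,2,3}"] by auto
  have "(\<lambda>n. ratio n j) \<longlonglongrightarrow> q" if "j \<in> {1,2,3}" for j
    using ratio_tendsto_of_recurrent[OF that bspec[OF assms that] q min_attained] .
  then show ?thesis by blast
qed

lemma ratio_tendsto_if_finite:
  assumes i: "i \<in> {1,2,3}" and "finite {n. w n = i}"
  shows "\<exists>q. \<forall>j\<in>{1,2,3} - {i}. (\<lambda>n. ratio n j) \<longlonglongrightarrow> q"
proof -
  have "eventually (\<lambda>n. w n \<noteq> i) sequentially"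
    using assms(2) by (simp add: eventually_cofinite flip: cofinite_eq_sequentially)
  then obtain N where N: "\<And>n. n \<ge> N \<Longrightarrow> w n \<noteq> i"
    unfolding eventually_sequentially by blast
  have "ratio n i = ratio N i" if "n \<ge> N" for n
    using that
  proof (induction n rule: dec_induct)
    case (step n)
    then show ?case using N[of n] i by (simp add: ratio_def num_Suc den_Suc)
  qed simp
  then have ratio_i: "(\<lambda>n. ratio n i) \<longlonglongrightarrow> ratio N i"
    by (intro tendsto_eventually eventually_sequentiallyI)
  have "(\<lambda>n. ratio n j) \<longlonglongrightarrow> ratio N i" if "j \<in> {1,2,3} - {i}" for j
    using that reduced_seq_recurrent[OF reduced assms that] i
    by (intro ratio_tendsto_of_recurrent[OF _ _ ratio_i]) auto
  then show ?thesis by blast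
qed

lemma shifted_ratio_tendsto:
  assumes "j \<in> {1,2,3}" "infinite {n. w n = j}" "(\<lambda>n. ratio n j) \<longlonglongrightarrow> q"
  shows "(\<lambda>n. (num n j - k) / den n j) \<longlonglongrightarrow> q"
proof -
  have "(\<lambda>n. ratio n j - k * inverse (den n j)) \<longlonglongrightarrow> q - k * 0"
    using assms(3) tendsto_inverse_0_at_top[OF den_tendsto_at_top[OF assms(1,2)]]
    by (intro tendsto_intros)
  then show ?thesis by (simp add: ratio_def divide_inverse left_diff_distrib)
qed

end

theorem theorem5p10:
  fixes k :: real and T t :: triple and w :: "nat \<Rightarrow> nat"
  assumes "k \<ge> 0"
    and "k_initial k T"
    and "k_initial 0 t"
    and "reduced_seq w"
  shows "((\<forall>i\<in>{1,2,3::nat}. infinite {n. w n = i}) \<longrightarrow>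
            (\<exists>q::real. \<forall>j\<in>{1,2,3::nat}.
               (\<lambda>n. comp j (iterM k w n T) / comp j (iterM 0 w n t)) \<longlonglongrightarrow> q))
       \<and> (\<forall>i\<in>{1,2,3::nat}. finite {n. w n = i} \<longrightarrow>
            (\<exists>q::real. \<forall>j\<in>{1,2,3::nat} - {i}.
               (\<lambda>n. comp j (iterM k w n T) / comp j (iterM 0 w n t)) \<longlonglongrightarrow> q))"
proof -
  interpret euclid_tree_pair w "shift k T" t
    using assms(3,4) by unfold_locales (simp_all add: k_initial_def)
  have ratio_eq: "(\<lambda>n. comp j (iterM k w n T) / comp j (iterM 0 w n t))
      = (\<lambda>n. (num n j - k) / den n j)" for j
    by (simp add: num_def den_def iterM_0_shift comp_shift)
  show ?thesis
  proof (intro conjI impI ballI)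
    assume recurrent: "\<forall>i\<in>{1,2,3::nat}. infinite {n. w n = i}"
    then obtain q where "\<forall>j\<in>{1,2,3}. (\<lambda>n. ratio n j) \<longlonglongrightarrow> q"
      using ratio_tendsto_if_all_recurrent by blast
    then show "\<exists>q. \<forall>j\<in>{1,2,3::nat}.
        (\<lambda>n. comp j (iterM k w n T) / comp j (iterM 0 w n t)) \<longlonglongrightarrow> q"
      unfolding ratio_eq using recurrent shifted_ratio_tendsto by blast
  next
    fix i :: nat
    assume i: "i \<in> {1,2,3}" and finite: "finite {n. w n = i}"
    obtain q where "\<forall>j\<in>{1,2,3} - {i}. (\<lambda>n. ratio n j) \<longlonglongrightarrow> q"
      using ratio_tendsto_if_finite[OF i finite] by blast
    then show "\<exists>q. \<forall>j\<in>{1,2,3::nat} - {i}.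
        (\<lambda>n. comp j (iterM k w n T) / comp j (iterM 0 w n t)) \<longlonglongrightarrow> q"
      unfolding ratio_eq using reduced_seq_recurrent[OF assms(4) i finite] shifted_ratio_tendsto
      by blast
  qed
qed

end
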